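(* Let $\alpha_1,\ldots,\alpha_m\in(0,1)$ with $\sum_{i=1}^m\alpha_i=1$, let $f:[0,1]^m\to\mathbb{C}$ be integrable with generalized Walsh expansion $f=\sum_{S\subseteq[m]}F_S$, and fix $1\le k\le m$. Suppose that for every $S\subseteq[m]$ with $|S|=k$: (a) if $k\ge 2$, $F_S$ is alternating with respect to the coordinates in $S$; and (b) if $k\le m-1$, then for every $\ell\in[m]\setminus S$, $$\frac{1}{\prod_{i\in S}\alpha_i}F_S(x)=\sum_{i\in S}\frac{1}{\prod_{j\in S_i}\alpha_j}F_{S_i}(x^{(i)})$$ for almost every $x$, where $S_i=(S\cup\{\ell\})\setminus\{i\}$ and $x^{(i)}$ is $x$ with coordinates $x_\ell$ and $x_i$ swapped. Then for every $\alpha$-partition $A_1,\ldots,A_m$ of $[0,1]$, $$\int_{A_1\times\cdots\times A_m} f^{=k} = 0,\qquad\text{where } f^{=k}:=\sum_{S\subseteq[m],\,|S|=k}F_S.$$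
   Context: $[m]=\{1,\ldots,m\}$, $\lambda$ is Lebesgue measure. For $x\in[0,1]^m$ and $S\subseteq[m]$, $x_S$ is the restriction of $x$ to coordinates in $S$; functions on $[0,1]^S$ are identified with their extensions $x\mapsto g(x_S)$ to $[0,1]^m$. The generalized Walsh expansion of an integrable $f:[0,1]^m\to\mathbb{C}$ is the unique expansion $f=\sum_{S\subseteq[m]}F_S$ such that each $F_S$ depends only on the coordinates in $S$ and $\int_0^1 F_S\,dx_i=0$ for every $i\in S$. A function is alternating with respect to the coordinates in $S$ if interchanging any two coordinates in $S$ changes its sign. Given $\alpha=(\alpha_1,\ldots,\alpha_m)$ with $\sum\alpha_i=1$, an $\alpha$-partition is a partition $A_1,\ldots,A_m$ of $[0,1]$ into measurable sets with $\lambda(A_i)=\alpha_i$ and such that the boundary of each $A_i$ has measure $0$. *)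

theory Defs
  imports "HOL-Analysis.Analysis"
begin

definition unit_lebesgue :: "real measure" where
  "unit_lebesgue = restrict_space lebesgue {0..1}"

text \<open>It is the completion of the product of the one-dimensional
  Lebesgue measures, i.e. m-dimensional Lebesgue measure on [0,1]^m.\<close>
definition cube_lebesgue :: "nat \<Rightarrow> (nat \<Rightarrow> real) measure" where
  "cube_lebesgue m = completion (PiM {1..m} (\<lambda>_. unit_lebesgue))"

definition walsh_expansion ::
  "nat \<Rightarrow> ((nat \<Rightarrow> real) \<Rightarrow> complex) \<Rightarrow> (nat set \<Rightarrow> (nat \<Rightarrow> real) \<Rightarrow> complex) \<Rightarrow> bool" where
  "walsh_expansion m f F \<longleftrightarrow>
     (\<forall>S. S \<subseteq> {1..m} \<longrightarrow> integrable (cube_lebesgue m) (F S)) \<and>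
     (\<forall>S. S \<subseteq> {1..m} \<longrightarrow> (\<forall>x\<in>space (cube_lebesgue m). \<forall>y\<in>space (cube_lebesgue m).
          (\<forall>i\<in>S. x i = y i) \<longrightarrow> F S x = F S y)) \<and>
     (\<forall>S. S \<subseteq> {1..m} \<longrightarrow> (\<forall>i\<in>S. AE x in cube_lebesgue m.
          integrable unit_lebesgue (\<lambda>t. F S (x(i := t))) \<and>
          integral\<^sup>L unit_lebesgue (\<lambda>t. F S (x(i := t))) = 0)) \<and>
     (AE x in cube_lebesgue m. f x = (\<Sum>S\<in>Pow {1..m}. F S x))"

definition alternating_on :: "nat \<Rightarrow> nat set \<Rightarrow> ((nat \<Rightarrow> real) \<Rightarrow> complex) \<Rightarrow> bool" where
  "alternating_on m S g \<longleftrightarrow>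
     (\<forall>i\<in>S. \<forall>j\<in>S. i \<noteq> j \<longrightarrow> (\<forall>x\<in>space (cube_lebesgue m).
        g (x(i := x j, j := x i)) = - g x))"

definition alpha_partition :: "nat \<Rightarrow> (nat \<Rightarrow> real) \<Rightarrow> (nat \<Rightarrow> real set) \<Rightarrow> bool" where
  "alpha_partition m \<alpha> A \<longleftrightarrow>
     (\<forall>i\<in>{1..m}. A i \<in> sets lebesgue \<and> measure lebesgue (A i) = \<alpha> i
                  \<and> frontier (A i) \<in> null_sets lebesgue) \<and>
     (\<Union>i\<in>{1..m}. A i) = {0..1} \<and>
     (\<forall>i\<in>{1..m}. \<forall>j\<in>{1..m}. i \<noteq> j \<longrightarrow> A i \<inter> A j = {})"

end

theory Submission
  imports Defs "HOL-Probability.Probability" "HOL-Combinatorics.Transposition"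
begin

(*
  Let K S be the integral of F S over the box that has A j in the coordinates j \<in> S and [0,1] in
  all others, and \<alpha>_S the product of the \<alpha> j over j \<in> S. Since F S does not depend on the
  coordinates outside S, its integral over A 1 \<times> \<dots> \<times> A m is (\<Prod>j. \<alpha> j) * K S / \<alpha>_S, so it
  suffices to show that the K S / \<alpha>_S sum to zero over the k-sets S.

  Let M T p q be the integral of F T over the box of K T with the factor A p replaced by A q. For
  p \<in> T, cutting the p-th factor [0,1] along the partition and using that F T has mean zero in x p
  gives 0 = \<Sum>q M T p q; the terms with q \<in> T - {p} vanish because F T is alternating and the box
  is symmetric in p and q, so K T = - \<Sum>q\<notin>T. M T p q. On the other hand, integrating hypothesis
  (b) over the box of K S and swapping x l with x i gives, for l \<notin> S,
  K S / \<alpha>_S = \<Sum>i\<in>S. M (S + l - i) l i / \<alpha>_(S + l - i). Multiplying the first relation by \<alpha> p,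
  the second by \<alpha> l and summing over all k-sets, the bijection (S, l, i) \<mapsto> (S + l - i, l, i)
  shows \<Sum>S. (\<Sum>l\<notin>S. \<alpha> l + \<Sum>p\<in>S. \<alpha> p) * K S / \<alpha>_S = 0, which is the claim as \<Sum>j. \<alpha> j = 1.
*)

lemma space_unit_lebesgue [simp]: "space unit_lebesgue = {0..1}"
  by (simp add: unit_lebesgue_def space_restrict_space)

lemma sets_unit_lebesgueI: "A \<in> sets lebesgue \<Longrightarrow> A \<subseteq> {0..1} \<Longrightarrow> A \<in> sets unit_lebesgue"
  unfolding unit_lebesgue_def sets_restrict_space by auto

lemma measure_unit_lebesgue:
  "A \<in> sets lebesgue \<Longrightarrow> A \<subseteq> {0..1} \<Longrightarrow> measure unit_lebesgue A = measure lebesgue A"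
  unfolding unit_lebesgue_def by (simp add: measure_restrict_space)

lemma alpha_partition_unit_lebesgue:
  assumes "alpha_partition m \<alpha> A"
  shows "\<And>j. j \<in> {1..m} \<Longrightarrow> A j \<in> sets unit_lebesgue"
    and "\<And>j. j \<in> {1..m} \<Longrightarrow> measure unit_lebesgue (A j) = \<alpha> j"
    and "disjoint_family_on A {1..m}" and "(\<Union>j\<in>{1..m}. A j) = {0..1}"
proof -
  have sub: "\<And>j. j \<in> {1..m} \<Longrightarrow> A j \<subseteq> {0..1}"
    and leb: "\<And>j. j \<in> {1..m} \<Longrightarrow> A j \<in> sets lebesgue"
    using assms unfolding alpha_partition_def by blast+
  show "A j \<in> sets unit_lebesgue" if "j \<in> {1..m}" for j
    by (rule sets_unit_lebesgueI[OF leb[OF that] sub[OF that]])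
  show "\<And>j. j \<in> {1..m} \<Longrightarrow> measure unit_lebesgue (A j) = \<alpha> j"
    using assms sub leb by (simp add: measure_unit_lebesgue alpha_partition_def)
  show "disjoint_family_on A {1..m}" "(\<Union>j\<in>{1..m}. A j) = {0..1}"
    using assms unfolding alpha_partition_def disjoint_family_on_def by blast+
qed

lemma prob_space_unit_lebesgue: "prob_space unit_lebesgue"
proof
  show "emeasure unit_lebesgue (space unit_lebesgue) = 1"
    unfolding unit_lebesgue_def by (simp add: emeasure_restrict_space space_restrict_space)
qed

interpretation unit_lebesgue: prob_space unit_lebesgue
  by (rule prob_space_unit_lebesgue)

interpretation unit_product: product_sigma_finite "\<lambda>_. unit_lebesgue"
  by unfold_locales

abbreviation unit_cube :: "nat set \<Rightarrow> (nat \<Rightarrow> real) measure" where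
  "unit_cube I \<equiv> PiM I (\<lambda>_. unit_lebesgue)"

lemma sets_unit_cube_PiE:
  "finite I \<Longrightarrow> (\<And>j. j \<in> I \<Longrightarrow> B j \<in> sets unit_lebesgue) \<Longrightarrow> PiE I B \<in> sets (unit_cube I)"
  by (intro sets_PiM_I_finite) auto

lemma sets_cube_lebesgue_PiE:
  "(\<And>j. j \<in> {1..m} \<Longrightarrow> B j \<in> sets unit_lebesgue) \<Longrightarrow> PiE {1..m} B \<in> sets (cube_lebesgue m)"
  unfolding cube_lebesgue_def by (simp add: sets_unit_cube_PiE)

lemma space_cube_lebesgue: "space (cube_lebesgue m) = PiE {1..m} (\<lambda>_. {0..1})"
  by (simp add: cube_lebesgue_def space_PiM)

lemma fun_upd_in_space_unit_cube:
  assumes x: "x \<in> space (unit_cube (I - {i}))" and i: "i \<in> I" and t: "t \<in> {0..1}"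
  shows "x(i := t) \<in> space (unit_cube I)"
proof -
  have "x(i := t) \<in> PiE (insert i (I - {i})) (\<lambda>_. {0..1})"
    using x t by (intro PiE_fun_upd) (simp_all add: space_PiM)
  moreover have "insert i (I - {i}) = I" using i by blast
  ultimately show ?thesis by (simp add: space_PiM)
qed

lemma fun_upd_in_space_cube_lebesgue:
  assumes y: "y \<in> space (cube_lebesgue m)" and j: "j \<in> {1..m}" and t: "t \<in> {0..1}"
  shows "y(j := t) \<in> space (cube_lebesgue m)"
proof -
  have "y(j := t) \<in> PiE (insert j {1..m}) (\<lambda>_. {0..1::real})"
    using y t by (intro PiE_fun_upd) (simp_all add: space_cube_lebesgue)
  moreover have "insert j {1..m} = {1..m}" using j by blast
  ultimately show ?thesis by (simp add: space_cube_lebesgue)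
qed

section \<open>Borel representatives on a completion\<close>

text \<open>Fubini's theorem is only available for the product measure itself, not for its completion
  \<open>cube_lebesgue\<close>; integrals over the cube are therefore computed via Borel representatives.\<close>

lemma borel_measurable_completion_AE:
  assumes g: "g \<in> borel_measurable M" and ae: "AE x in M. f x = g x"
  shows "f \<in> borel_measurable (completion M)"
proof (rule measurableI)
  fix B :: "'b set" assume B: "B \<in> sets borel"
  have A: "g -` B \<inter> space M \<in> sets (completion M)" using g B by (simp add: measurable_sets)
  have "AE x in completion M. x \<in> g -` B \<inter> space M \<longleftrightarrow> x \<in> f -` B \<inter> space (completion M)"
    using AE_completion[OF ae] AE_space[of "completion M"] by eventually_elim auto
  then show "f -` B \<inter> space (completion M) \<in> sets (completion M)"
    by (rule completion.in_sets_AE[OF _ A]) auto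
qed simp

lemma completion_ex_borel_measurable_complex:
  fixes G :: "'a \<Rightarrow> complex"
  assumes "G \<in> borel_measurable (completion M)"
  obtains g where "g \<in> borel_measurable M" "AE x in M. G x = g x"
proof -
  have "(\<lambda>x. Re (G x)) \<in> borel_measurable (completion M)"
    "(\<lambda>x. Im (G x)) \<in> borel_measurable (completion M)"
    using assms by auto
  from this[THEN completion_ex_borel_measurable_real]
  obtain gr gi where gr: "gr \<in> borel_measurable M" "AE x in M. Re (G x) = gr x"
    and gi: "gi \<in> borel_measurable M" "AE x in M. Im (G x) = gi x" by blast
  show ?thesis
  proof
    show "(\<lambda>x. Complex (gr x) (gi x)) \<in> borel_measurable M"
      using gr gi by (auto intro!: borel_measurable_complex_iff[THEN iffD2])
    show "AE x in M. G x = Complex (gr x) (gi x)"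
      using gr(2) gi(2) by eventually_elim (simp add: complex_eq_iff)
  qed
qed

lemma completion_integrable_representative:
  fixes G :: "'a \<Rightarrow> complex"
  assumes G: "integrable (completion M) G"
  obtains g where "g \<in> borel_measurable M" "integrable M g" "AE x in M. G x = g x"
proof -
  obtain g where g: "g \<in> borel_measurable M" "AE x in M. G x = g x"
    by (rule completion_ex_borel_measurable_complex[OF borel_measurable_integrable[OF G]])
  have "integrable (completion M) g"
    using g by (intro integrable_cong_AE_imp[OF G]) (auto simp: AE_completion_iff measurable_completion)
  with g have "integrable M g" by (simp add: integrable_completion)
  with g that show thesis by blast
qed

lemma set_integral_completion_AE:
  fixes G g :: "'a \<Rightarrow> complex"
  assumes g: "g \<in> borel_measurable M" and ae: "AE x in M. G x = g x" and X: "X \<in> sets M"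
  shows "(LINT x:X|completion M. G x) = (LINT x:X|M. g x)"
proof -
  have "(LINT x:X|completion M. G x) = (LINT x:X|completion M. g x)"
    unfolding set_lebesgue_integral_def
  proof (intro integral_cong_AE)
    show "(\<lambda>x. indicator X x *\<^sub>R G x) \<in> borel_measurable (completion M)"
      using X borel_measurable_completion_AE[OF g ae]
      by (intro borel_measurable_scaleR borel_measurable_indicator) auto
    show "(\<lambda>x. indicator X x *\<^sub>R g x) \<in> borel_measurable (completion M)"
      using X g by (intro borel_measurable_scaleR borel_measurable_indicator measurable_completion) auto
    show "AE x in completion M. indicator X x *\<^sub>R G x = indicator X x *\<^sub>R g x"
      using ae by (auto simp: AE_completion_iff elim: AE_mp)
  qed
  also have "\<dots> = (LINT x:X|M. g x)"
    unfolding set_lebesgue_integral_def using X g by (intro integral_completion) auto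
  finally show ?thesis .
qed

section \<open>Integrating out one coordinate of the unit cube\<close>

lemma fun_upd_in_PiE_insert_iff:
  assumes "i \<notin> I" "x \<in> extensional I"
  shows "x(i := t) \<in> PiE (insert i I) (B(i := D)) \<longleftrightarrow> x \<in> PiE I B \<and> t \<in> D"
  using assms by (auto simp: PiE_iff extensional_def split: if_splits)

lemma integral_unit_cube_box_fun_upd:
  fixes g :: "(nat \<Rightarrow> real) \<Rightarrow> complex"
  assumes g: "integrable (unit_cube I) g" and I: "finite I" "i \<in> I"
    and B: "\<And>j. j \<in> I \<Longrightarrow> B j \<in> sets unit_lebesgue" and D: "D \<in> sets unit_lebesgue"
  shows "(LINT x:PiE I (B(i := D))|unit_cube I. g x)
    = (LINT x:PiE (I - {i}) B|unit_cube (I - {i}). LINT t:D|unit_lebesgue. g (x(i := t)))"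
proof -
  define J where "J = I - {i}"
  have ins: "I = insert i J" "finite J" "i \<notin> J" using I by (auto simp: J_def)
  have X: "PiE I (B(i := D)) \<in> sets (unit_cube I)"
    using I B D by (intro sets_unit_cube_PiE) auto
  have int: "integrable (unit_cube (insert i J)) (\<lambda>x. indicator (PiE I (B(i := D))) x *\<^sub>R g x)"
    unfolding ins(1)[symmetric] by (rule integrable_mult_indicator[OF X g])
  have box: "indicator (PiE I (B(i := D))) (x(i := t)) = (indicator (PiE J B) x * indicator D t :: real)"
    if "x \<in> space (unit_cube J)" for x t
    using that ins by (simp add: indicator_def fun_upd_in_PiE_insert_iff space_PiM PiE_def)
  have "(LINT x:PiE I (B(i := D))|unit_cube I. g x)
     = (LINT x|unit_cube J. LINT t|unit_lebesgue.
          indicator (PiE I (B(i := D))) (x(i := t)) *\<^sub>R g (x(i := t)))"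
    unfolding set_lebesgue_integral_def ins(1)
    by (rule unit_product.product_integral_insert[OF ins(2,3) int[unfolded ins(1)]])
  also have "\<dots> = (LINT x:PiE J B|unit_cube J. LINT t:D|unit_lebesgue. g (x(i := t)))"
    unfolding set_lebesgue_integral_def
    by (intro Bochner_Integration.integral_cong refl) (simp add: box flip: integral_scaleR_right)
  finally show ?thesis by (simp add: J_def)
qed

lemma AE_fun_upd_notin_null_set:
  assumes N: "N \<in> null_sets (unit_cube I)" and I: "finite I" "i \<in> I"
  shows "AE x in unit_cube (I - {i}). AE t in unit_lebesgue. x(i := t) \<notin> N"
proof -
  define J where "J = I - {i}"
  have ins: "I = insert i J" "finite J" "i \<notin> J" using I by (auto simp: J_def)
  have N_sets: "N \<in> sets (unit_cube (insert i J))" using N ins(1) by auto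
  have joint_meas: "(\<lambda>(x, t). indicator N (x(i := t)) :: ennreal)
      \<in> borel_measurable (unit_cube J \<Otimes>\<^sub>M unit_lebesgue)"
    using measurable_compose[OF measurable_add_dim borel_measurable_indicator[OF N_sets]]
    by (simp add: split_beta')
  have slice_meas:
    "(\<lambda>x. \<integral>\<^sup>+ t. indicator N (x(i := t)) \<partial>unit_lebesgue) \<in> borel_measurable (unit_cube J)"
    using unit_lebesgue.borel_measurable_nn_integral[OF joint_meas] by simp
  have "(\<integral>\<^sup>+ x. (\<integral>\<^sup>+ t. indicator N (x(i := t)) \<partial>unit_lebesgue) \<partial>unit_cube J)
      = integral\<^sup>N (unit_cube (insert i J)) (indicator N)"
    by (intro unit_product.product_nn_integral_insert[symmetric] ins borel_measurable_indicator N_sets)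
  also have "\<dots> = 0" using null_setsD1[OF N] N_sets by (simp add: nn_integral_indicator ins(1)[symmetric])
  finally have "AE x in unit_cube J. (\<integral>\<^sup>+ t. indicator N (x(i := t)) \<partial>unit_lebesgue) = 0"
    using nn_integral_0_iff_AE[OF slice_meas] by simp
  then have "AE x in unit_cube J. AE t in unit_lebesgue. x(i := t) \<notin> N"
    using AE_space
  proof eventually_elim
    case (elim x)
    have "(\<lambda>t. indicator N (x(i := t)) :: ennreal) \<in> borel_measurable unit_lebesgue"
      by (rule measurable_compose[OF measurable_component_update[OF elim(2) ins(3)]
            borel_measurable_indicator[OF N_sets]])
    with elim(1) show ?case by (simp add: nn_integral_0_iff_AE indicator_eq_0_iff)
  qed
  then show ?thesis unfolding J_def .
qed

lemma AE_unit_cube_fun_upd: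
  assumes ae: "AE y in unit_cube I. R y" and I: "finite I" "i \<in> I"
  shows "AE x in unit_cube (I - {i}). AE t in unit_lebesgue. R (x(i := t))"
proof -
  obtain N where N: "{y \<in> space (unit_cube I). \<not> R y} \<subseteq> N" "N \<in> null_sets (unit_cube I)"
    using AE_E[OF ae] by (metis null_setsI)
  show ?thesis
    using AE_fun_upd_notin_null_set[OF N(2) I] AE_space
  proof eventually_elim
    case (elim x)
    note x = elim(2)
    from elim(1) AE_space show ?case
    proof eventually_elim
      case (elim t)
      with fun_upd_in_space_unit_cube[of x I i t] x I(2) N(1) show ?case by auto
    qed
  qed
qed

lemma borel_measurable_fun_upd_slice:
  fixes g :: "(nat \<Rightarrow> real) \<Rightarrow> 'b::{banach, second_countable_topology}"
  assumes g: "g \<in> borel_measurable (unit_cube I)" and i: "i \<in> I" and x: "x \<in> space (unit_cube (I - {i}))"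
  shows "(\<lambda>t. g (x(i := t))) \<in> borel_measurable unit_lebesgue"
proof -
  have "insert i (I - {i}) = I" using i by blast
  with g have "g \<in> borel_measurable (unit_cube (insert i (I - {i})))" by simp
  then show ?thesis by (intro measurable_compose[OF measurable_component_update[OF x]]) auto
qed

lemma borel_measurable_slice_set_integral:
  fixes g :: "(nat \<Rightarrow> real) \<Rightarrow> 'b::{banach, second_countable_topology}"
  assumes g: "g \<in> borel_measurable (unit_cube I)" and i: "i \<in> I" and D: "D \<in> sets unit_lebesgue"
  shows "(\<lambda>x. LINT t:D|unit_lebesgue. g (x(i := t))) \<in> borel_measurable (unit_cube (I - {i}))"
proof -
  have "insert i (I - {i}) = I" using i by blast
  with g have "(\<lambda>z. g ((\<lambda>(x, t). x(i := t)) z))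
      \<in> borel_measurable (unit_cube (I - {i}) \<Otimes>\<^sub>M unit_lebesgue)"
    by (intro measurable_compose[OF measurable_add_dim]) auto
  then have "(\<lambda>(x, t). indicator D t *\<^sub>R g (x(i := t)))
      \<in> borel_measurable (unit_cube (I - {i}) \<Otimes>\<^sub>M unit_lebesgue)"
    using D by (auto intro!: borel_measurable_scaleR borel_measurable_indicator measurable_compose[OF measurable_snd]
        simp: case_prod_beta')
  from unit_lebesgue.borel_measurable_lebesgue_integral[OF this] show ?thesis
    by (simp add: set_lebesgue_integral_def)
qed

section \<open>Integrals over boxes in the cube\<close>

definition box_integral :: "nat \<Rightarrow> (nat \<Rightarrow> real set) \<Rightarrow> ((nat \<Rightarrow> real) \<Rightarrow> complex) \<Rightarrow> complex" where
  "box_integral m B G = (LINT x:PiE {1..m} B|cube_lebesgue m. G x)"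

lemma box_integral_sum:
  fixes G :: "'i \<Rightarrow> (nat \<Rightarrow> real) \<Rightarrow> complex"
  assumes G: "\<And>i. i \<in> I \<Longrightarrow> integrable (cube_lebesgue m) (G i)"
    and B: "\<And>j. j \<in> {1..m} \<Longrightarrow> B j \<in> sets unit_lebesgue"
  shows "box_integral m B (\<lambda>x. \<Sum>i\<in>I. G i x) = (\<Sum>i\<in>I. box_integral m B (G i))"
  unfolding box_integral_def set_lebesgue_integral_def scaleR_sum_right
  by (intro Bochner_Integration.integral_sum integrable_mult_indicator sets_cube_lebesgue_PiE G B)

lemma box_integral_divide: "box_integral m B (\<lambda>x. G x / c) = box_integral m B G / c"
  by (simp add: box_integral_def)

lemma box_integral_representative:
  fixes G g :: "(nat \<Rightarrow> real) \<Rightarrow> complex"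
  assumes g: "g \<in> borel_measurable (unit_cube {1..m})" "AE x in unit_cube {1..m}. G x = g x"
    and B: "\<And>j. j \<in> {1..m} \<Longrightarrow> B j \<in> sets unit_lebesgue"
  shows "box_integral m B G = (LINT x:PiE {1..m} B|unit_cube {1..m}. g x)"
  unfolding box_integral_def cube_lebesgue_def
  using g B by (intro set_integral_completion_AE sets_unit_cube_PiE) auto

lemma box_integral_fun_upd_slices:
  fixes G g :: "(nat \<Rightarrow> real) \<Rightarrow> complex"
  assumes g: "integrable (unit_cube {1..m}) g" "AE x in unit_cube {1..m}. G x = g x"
    and j: "j \<in> {1..m}" and B: "\<And>k. k \<in> {1..m} \<Longrightarrow> B k \<in> sets unit_lebesgue"
    and D: "D \<in> sets unit_lebesgue"
  shows "box_integral m (B(j := D)) G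
    = (LINT x:PiE ({1..m} - {j}) B|unit_cube ({1..m} - {j}). LINT t:D|unit_lebesgue. g (x(j := t)))"
  using box_integral_representative[OF borel_measurable_integrable[OF g(1)] g(2), of "B(j := D)"]
    integral_unit_cube_box_fun_upd[OF g(1) _ j B D] B D by simp

lemma AE_slice_integral_eq_0:
  fixes G g :: "(nat \<Rightarrow> real) \<Rightarrow> complex"
  assumes g: "g \<in> borel_measurable (unit_cube {1..m})" "AE x in unit_cube {1..m}. G x = g x"
    and i: "i \<in> {1..m}"
    and mean_zero: "AE y in cube_lebesgue m. integrable unit_lebesgue (\<lambda>t. G (y(i := t)))
       \<and> (LINT t|unit_lebesgue. G (y(i := t))) = 0"
  shows "AE x in unit_cube ({1..m} - {i}). (LINT t:{0..1}|unit_lebesgue. g (x(i := t))) = 0"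
proof -
  have "AE x in unit_cube ({1..m} - {i}). AE t in unit_lebesgue. G (x(i := t)) = g (x(i := t))"
    by (rule AE_unit_cube_fun_upd[OF g(2) finite_atLeastAtMost i])
  moreover have "AE x in unit_cube ({1..m} - {i}). AE t in unit_lebesgue.
      integrable unit_lebesgue (\<lambda>s. G (x(i := s))) \<and> (LINT s|unit_lebesgue. G (x(i := s))) = 0"
    using AE_unit_cube_fun_upd[OF mean_zero[unfolded cube_lebesgue_def AE_completion_iff]
        finite_atLeastAtMost i] by simp
  ultimately show ?thesis
    using AE_space
  proof eventually_elim
    case (elim x)
    then have G_slice: "integrable unit_lebesgue (\<lambda>s. G (x(i := s)))"
      "(LINT s|unit_lebesgue. G (x(i := s))) = 0" by simp_all
    have "AE t \<in> {0..1} in unit_lebesgue. g (x(i := t)) = G (x(i := t))"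
      using elim(1) by eventually_elim simp
    then have "(LINT t:{0..1}|unit_lebesgue. g (x(i := t))) = (LINT t:{0..1}|unit_lebesgue. G (x(i := t)))"
      using sets.top[of unit_lebesgue]
      by (intro set_lebesgue_integral_cong_AE borel_measurable_fun_upd_slice[OF g(1) i elim(3)]
          borel_measurable_integrable[OF G_slice(1)]) simp_all
    also have "\<dots> = 0"
      using set_integral_space[OF G_slice(1)] G_slice(2) by simp
    finally show ?case .
  qed
qed

lemma AE_slice_integral_const:
  fixes G g :: "(nat \<Rightarrow> real) \<Rightarrow> complex"
  assumes g: "g \<in> borel_measurable (unit_cube {1..m})" "AE x in unit_cube {1..m}. G x = g x"
    and j: "j \<in> {1..m}"
    and const: "\<And>y t. y \<in> space (cube_lebesgue m) \<Longrightarrow> t \<in> {0..1} \<Longrightarrow> G (y(j := t)) = G y"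
  shows "AE x in unit_cube ({1..m} - {j}). \<forall>D \<in> sets unit_lebesgue.
    (LINT t:D|unit_lebesgue. g (x(j := t))) = measure unit_lebesgue D *\<^sub>R G (x(j := 0))"
  using AE_unit_cube_fun_upd[OF g(2) finite_atLeastAtMost j] AE_space
proof eventually_elim
  case (elim x)
  have "x(j := 0) \<in> space (cube_lebesgue m)"
    using fun_upd_in_space_unit_cube[of x "{1..m}" j 0] elim(2) j by (simp add: cube_lebesgue_def)
  have slice: "AE t in unit_lebesgue. g (x(j := t)) = G (x(j := 0))"
    using elim(1) AE_space
  proof eventually_elim
    case (elim t)
    then have "G ((x(j := 0))(j := t)) = G (x(j := 0))"
      by (intro const \<open>x(j := 0) \<in> space (cube_lebesgue m)\<close>) simp
    with elim(1) show ?case by simp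
  qed
  show ?case
  proof
    fix D assume D: "D \<in> sets unit_lebesgue"
    have "(LINT t:D|unit_lebesgue. g (x(j := t))) = (LINT t:D|unit_lebesgue. G (x(j := 0)))"
    proof (rule set_lebesgue_integral_cong_AE)
      show "AE t \<in> D in unit_lebesgue. g (x(j := t)) = G (x(j := 0))"
        using slice by eventually_elim simp
    qed (use D borel_measurable_fun_upd_slice[OF g(1) j elim(2)] in simp_all)
    also have "\<dots> = measure unit_lebesgue D *\<^sub>R G (x(j := 0))"
      using D by (intro set_integral_const) simp_all
    finally show "(LINT t:D|unit_lebesgue. g (x(j := t))) = measure unit_lebesgue D *\<^sub>R G (x(j := 0))" .
  qed
qed

lemma box_integral_eq_0_if_mean_zero:
  fixes G :: "(nat \<Rightarrow> real) \<Rightarrow> complex"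
  assumes G: "integrable (cube_lebesgue m) G" and i: "i \<in> {1..m}"
    and B: "\<And>j. j \<in> {1..m} \<Longrightarrow> B j \<in> sets unit_lebesgue" and Bi: "B i = {0..1}"
    and mean_zero: "AE y in cube_lebesgue m. integrable unit_lebesgue (\<lambda>t. G (y(i := t)))
       \<and> (LINT t|unit_lebesgue. G (y(i := t))) = 0"
  shows "box_integral m B G = 0"
proof -
  obtain g where g: "g \<in> borel_measurable (unit_cube {1..m})" "integrable (unit_cube {1..m}) g"
      "AE x in unit_cube {1..m}. G x = g x"
    using G unfolding cube_lebesgue_def by (rule completion_integrable_representative)
  have U01: "{0..1} \<in> sets unit_lebesgue" using sets.top[of unit_lebesgue] by simp
  have "box_integral m B G = box_integral m (B(i := {0..1})) G"
    using Bi by (simp add: fun_upd_idem)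
  also have "\<dots> = (LINT x:PiE ({1..m} - {i}) B|unit_cube ({1..m} - {i}).
      LINT t:{0..1}|unit_lebesgue. g (x(i := t)))"
    by (rule box_integral_fun_upd_slices[OF g(2,3) i B U01])
  also have "\<dots> = (LINT x:PiE ({1..m} - {i}) B|unit_cube ({1..m} - {i}). 0)"
  proof (rule set_lebesgue_integral_cong_AE)
    show "PiE ({1..m} - {i}) B \<in> sets (unit_cube ({1..m} - {i}))"
      using B by (intro sets_unit_cube_PiE) auto
    show "AE x \<in> PiE ({1..m} - {i}) B in unit_cube ({1..m} - {i}).
        (LINT t:{0..1}|unit_lebesgue. g (x(i := t))) = 0"
      using AE_slice_integral_eq_0[OF g(1,3) i mean_zero] by eventually_elim simp
    show "(\<lambda>x. LINT t:{0..1}|unit_lebesgue. g (x(i := t))) \<in> borel_measurable (unit_cube ({1..m} - {i}))"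
      by (rule borel_measurable_slice_set_integral[OF g(1) i U01])
  qed simp
  finally show ?thesis by simp
qed

lemma box_integral_fun_upd_const:
  fixes G :: "(nat \<Rightarrow> real) \<Rightarrow> complex"
  assumes G: "integrable (cube_lebesgue m) G" and j: "j \<in> {1..m}"
    and B: "\<And>k. k \<in> {1..m} \<Longrightarrow> B k \<in> sets unit_lebesgue" and Bj: "B j = {0..1}"
    and D: "D \<in> sets unit_lebesgue"
    and const: "\<And>y t. y \<in> space (cube_lebesgue m) \<Longrightarrow> t \<in> {0..1} \<Longrightarrow> G (y(j := t)) = G y"
  shows "box_integral m (B(j := D)) G = measure unit_lebesgue D *\<^sub>R box_integral m B G"
proof -
  obtain g where g: "g \<in> borel_measurable (unit_cube {1..m})" "integrable (unit_cube {1..m}) g"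
      "AE x in unit_cube {1..m}. G x = g x"
    using G unfolding cube_lebesgue_def by (rule completion_integrable_representative)
  define J where "J = {1..m} - {j}"
  have U01: "{0..1} \<in> sets unit_lebesgue" using sets.top[of unit_lebesgue] by simp
  have slices: "AE x in unit_cube J. \<forall>D \<in> sets unit_lebesgue.
      (LINT t:D|unit_lebesgue. g (x(j := t))) = measure unit_lebesgue D *\<^sub>R G (x(j := 0))"
    unfolding J_def using const by (rule AE_slice_integral_const[OF g(1,3) j])
  have "box_integral m (B(j := D)) G
      = (LINT x:PiE J B|unit_cube J. LINT t:D|unit_lebesgue. g (x(j := t)))"
    unfolding J_def by (rule box_integral_fun_upd_slices[OF g(2,3) j B D])
  also have "\<dots> = (LINT x:PiE J B|unit_cube J.
      measure unit_lebesgue D *\<^sub>R (LINT t:{0..1}|unit_lebesgue. g (x(j := t))))"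
  proof (rule set_lebesgue_integral_cong_AE)
    show "PiE J B \<in> sets (unit_cube J)"
      using B by (intro sets_unit_cube_PiE) (auto simp: J_def)
    show "AE x \<in> PiE J B in unit_cube J. (LINT t:D|unit_lebesgue. g (x(j := t)))
        = measure unit_lebesgue D *\<^sub>R (LINT t:{0..1}|unit_lebesgue. g (x(j := t)))"
      using slices by eventually_elim (use D U01 unit_lebesgue.prob_space in simp)
    show "(\<lambda>x. LINT t:D|unit_lebesgue. g (x(j := t))) \<in> borel_measurable (unit_cube J)"
      unfolding J_def by (rule borel_measurable_slice_set_integral[OF g(1) j D])
    show "(\<lambda>x. measure unit_lebesgue D *\<^sub>R (LINT t:{0..1}|unit_lebesgue. g (x(j := t))))
        \<in> borel_measurable (unit_cube J)"
      unfolding J_def by (intro borel_measurable_scaleR borel_measurable_const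
          borel_measurable_slice_set_integral[OF g(1) j U01])
  qed
  also have "\<dots> = measure unit_lebesgue D *\<^sub>R box_integral m (B(j := {0..1})) G"
    using box_integral_fun_upd_slices[OF g(2,3) j B U01] by (simp add: J_def)
  also have "B(j := {0..1}) = B" using Bj by (rule fun_upd_idem)
  finally show ?thesis .
qed

definition swap_coords :: "nat \<Rightarrow> nat \<Rightarrow> nat \<Rightarrow> (nat \<Rightarrow> real) \<Rightarrow> nat \<Rightarrow> real" where
  "swap_coords m l i x = (\<lambda>n\<in>{1..m}. x (Transposition.transpose l i n))"

lemma transpose_in_atLeastAtMost:
  "l \<in> {a..b} \<Longrightarrow> i \<in> {a..b} \<Longrightarrow> n \<in> {a..b} \<Longrightarrow> Transposition.transpose l i n \<in> {a..b}"
  by (simp add: Transposition.transpose_def)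

lemma measurable_swap_coords:
  assumes "l \<in> {1..m}" "i \<in> {1..m}"
  shows "swap_coords m l i \<in> unit_cube {1..m} \<rightarrow>\<^sub>M unit_cube {1..m}"
  unfolding swap_coords_def
  using assms by (intro measurable_restrict measurable_component_singleton transpose_in_atLeastAtMost)

lemma distr_swap_coords:
  assumes "l \<in> {1..m}" "i \<in> {1..m}"
  shows "distr (unit_cube {1..m}) (unit_cube {1..m}) (swap_coords m l i) = unit_cube {1..m}"
proof -
  have "inj_on (Transposition.transpose l i) {1..m}" by (metis inj_onI Transposition.transpose_involutory)
  moreover have "Transposition.transpose l i \<in> {1..m} \<rightarrow> {1..m}" using assms transpose_in_atLeastAtMost by blast
  ultimately have "distr (unit_cube {1..m}) (\<Pi>\<^sub>M n\<in>{1..m}. (\<lambda>_. unit_lebesgue) (Transposition.transpose l i n))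
      (\<lambda>x. \<lambda>n\<in>{1..m}. x (Transposition.transpose l i n))
    = (\<Pi>\<^sub>M n\<in>{1..m}. (\<lambda>_. unit_lebesgue) (Transposition.transpose l i n))"
    by (intro distr_PiM_reindex) (auto simp: prob_space_unit_lebesgue)
  then show ?thesis by (simp add: swap_coords_def[abs_def])
qed

lemma swap_coords_eq_fun_upd:
  assumes "x \<in> space (unit_cube {1..m})" "l \<in> {1..m}" "i \<in> {1..m}"
  shows "swap_coords m l i x = x(l := x i, i := x l)"
proof
  fix n
  show "swap_coords m l i x n = (x(l := x i, i := x l)) n"
    using assms by (cases "n \<in> {1..m}")
      (auto simp: swap_coords_def Transposition.transpose_def space_PiM PiE_def extensional_def)
qed

lemma swap_coords_in_PiE_iff:
  assumes x: "x \<in> space (unit_cube {1..m})" and "l \<in> {1..m}" "i \<in> {1..m}"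
  shows "swap_coords m l i x \<in> PiE {1..m} (B(l := B i, i := B l)) \<longleftrightarrow> x \<in> PiE {1..m} B"
proof -
  have "B(l := B i, i := B l) = (\<lambda>n. B (Transposition.transpose l i n))" by (auto simp: Transposition.transpose_def fun_eq_iff)
  then have "swap_coords m l i x \<in> PiE {1..m} (B(l := B i, i := B l))
      \<longleftrightarrow> (\<forall>n\<in>{1..m}. x (Transposition.transpose l i n) \<in> B (Transposition.transpose l i n))"
    unfolding swap_coords_def by (simp only: restrict_PiE_iff)
  also have "\<dots> \<longleftrightarrow> (\<forall>n\<in>Transposition.transpose l i ` {1..m}. x n \<in> B n)"
    by blast
  also have "Transposition.transpose l i ` {1..m} = {1..m}" using assms by (intro Transposition.transpose_image_eq) simp
  also have "(\<forall>n\<in>{1..m}. x n \<in> B n) \<longleftrightarrow> x \<in> PiE {1..m} B"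
    using x by (simp add: space_PiM PiE_iff)
  finally show ?thesis .
qed

lemma swap_coords_representative:
  fixes G g :: "(nat \<Rightarrow> real) \<Rightarrow> complex"
  assumes g: "g \<in> borel_measurable (unit_cube {1..m})" "AE x in unit_cube {1..m}. G x = g x"
    and l: "l \<in> {1..m}" and i: "i \<in> {1..m}"
  shows "(\<lambda>x. g (swap_coords m l i x)) \<in> borel_measurable (unit_cube {1..m})"
    and "AE x in unit_cube {1..m}. G (x(l := x i, i := x l)) = g (swap_coords m l i x)"
proof -
  show "(\<lambda>x. g (swap_coords m l i x)) \<in> borel_measurable (unit_cube {1..m})"
    using measurable_swap_coords[OF l i] g(1) by (rule measurable_compose)
  have "AE x in distr (unit_cube {1..m}) (unit_cube {1..m}) (swap_coords m l i). G x = g x"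
    using g(2) by (simp only: distr_swap_coords[OF l i])
  then have "AE x in unit_cube {1..m}. G (swap_coords m l i x) = g (swap_coords m l i x)"
    by (rule AE_distrD[OF measurable_swap_coords[OF l i]])
  then show "AE x in unit_cube {1..m}. G (x(l := x i, i := x l)) = g (swap_coords m l i x)"
    using AE_space
  proof eventually_elim
    case (elim x)
    with swap_coords_eq_fun_upd[OF elim(2) l i] show ?case by simp
  qed
qed

lemma integrable_swap_coords:
  fixes G :: "(nat \<Rightarrow> real) \<Rightarrow> complex"
  assumes G: "integrable (cube_lebesgue m) G" and l: "l \<in> {1..m}" and i: "i \<in> {1..m}"
  shows "integrable (cube_lebesgue m) (\<lambda>x. G (x(l := x i, i := x l)))"
proof -
  obtain g where g: "g \<in> borel_measurable (unit_cube {1..m})" "integrable (unit_cube {1..m}) g"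
      "AE x in unit_cube {1..m}. G x = g x"
    using G unfolding cube_lebesgue_def by (rule completion_integrable_representative)
  note swap = swap_coords_representative[OF g(1,3) l i]
  have "integrable (unit_cube {1..m}) (\<lambda>x. g (swap_coords m l i x))"
    using g(2) integrable_distr_eq[OF measurable_swap_coords[OF l i] g(1)]
    by (simp only: distr_swap_coords[OF l i])
  then have "integrable (completion (unit_cube {1..m})) (\<lambda>x. g (swap_coords m l i x))"
    using swap(1) by (simp add: integrable_completion)
  moreover have "AE x in completion (unit_cube {1..m}). g (swap_coords m l i x) = G (x(l := x i, i := x l))"
    using swap(2) unfolding AE_completion_iff by eventually_elim simp
  ultimately show ?thesis
    unfolding cube_lebesgue_def by (rule integrable_cong_AE_imp[OF _ borel_measurable_completion_AE[OF swap]])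
qed

lemma box_integral_swap:
  fixes G :: "(nat \<Rightarrow> real) \<Rightarrow> complex"
  assumes G: "integrable (cube_lebesgue m) G" and l: "l \<in> {1..m}" and i: "i \<in> {1..m}"
    and B: "\<And>j. j \<in> {1..m} \<Longrightarrow> B j \<in> sets unit_lebesgue"
  shows "box_integral m B (\<lambda>x. G (x(l := x i, i := x l))) = box_integral m (B(l := B i, i := B l)) G"
proof -
  obtain g where g: "g \<in> borel_measurable (unit_cube {1..m})" "AE x in unit_cube {1..m}. G x = g x"
    using G unfolding cube_lebesgue_def by (rule completion_integrable_representative)
  note swap = swap_coords_representative[OF g l i]
  define B' where "B' = B(l := B i, i := B l)"
  have B': "\<And>j. j \<in> {1..m} \<Longrightarrow> B' j \<in> sets unit_lebesgue" using B l i by (simp add: B'_def)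
  have "box_integral m B (\<lambda>x. G (x(l := x i, i := x l)))
      = (LINT x|unit_cube {1..m}. indicator (PiE {1..m} B) x *\<^sub>R g (swap_coords m l i x))"
    unfolding set_lebesgue_integral_def[symmetric] by (rule box_integral_representative[OF swap B])
  also have "\<dots> = (LINT x|unit_cube {1..m}. (\<lambda>y. indicator (PiE {1..m} B') y *\<^sub>R g y) (swap_coords m l i x))"
    using swap_coords_in_PiE_iff[OF _ l i] by (intro Bochner_Integration.integral_cong) (simp_all add: B'_def indicator_def)
  also have "\<dots> = (LINT y|distr (unit_cube {1..m}) (unit_cube {1..m}) (swap_coords m l i).
      indicator (PiE {1..m} B') y *\<^sub>R g y)"
    using g(1) B' by (intro integral_distr[OF measurable_swap_coords[OF l i], symmetric]
        borel_measurable_scaleR borel_measurable_indicator sets_unit_cube_PiE) auto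
  also have "\<dots> = (LINT y|unit_cube {1..m}. indicator (PiE {1..m} B') y *\<^sub>R g y)"
    by (simp only: distr_swap_coords[OF l i])
  also have "\<dots> = box_integral m B' G"
    unfolding set_lebesgue_integral_def[symmetric] by (rule box_integral_representative[OF g B', symmetric])
  finally show ?thesis by (simp add: B'_def)
qed

lemma box_integral_alternating_eq_0:
  fixes G :: "(nat \<Rightarrow> real) \<Rightarrow> complex"
  assumes G: "integrable (cube_lebesgue m) G" and i: "i \<in> {1..m}" and j: "j \<in> {1..m}"
    and alt: "\<And>x. x \<in> space (cube_lebesgue m) \<Longrightarrow> G (x(i := x j, j := x i)) = - G x"
    and B: "\<And>k. k \<in> {1..m} \<Longrightarrow> B k \<in> sets unit_lebesgue" and Bij: "B i = B j"
  shows "box_integral m B G = 0"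
proof -
  have "box_integral m B G = box_integral m B (\<lambda>x. - G (x(i := x j, j := x i)))"
    unfolding box_integral_def set_lebesgue_integral_def
    by (intro Bochner_Integration.integral_cong) (simp_all add: alt)
  also have "\<dots> = - box_integral m B (\<lambda>x. G (x(i := x j, j := x i)))"
    by (simp add: box_integral_def set_lebesgue_integral_def)
  also have "\<dots> = - box_integral m (B(i := B j, j := B i)) G"
    by (simp only: box_integral_swap[OF G i j B])
  also have "B(i := B j, j := B i) = B" using Bij by (metis fun_upd_triv)
  finally show ?thesis by simp
qed

lemma box_integral_partition_sum:
  fixes G :: "(nat \<Rightarrow> real) \<Rightarrow> complex"
  assumes G: "integrable (cube_lebesgue m) G" and i: "i \<in> {1..m}"
    and B: "\<And>k. k \<in> {1..m} \<Longrightarrow> B k \<in> sets unit_lebesgue"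
    and P: "finite P" and A: "\<And>a. a \<in> P \<Longrightarrow> A a \<in> sets unit_lebesgue"
    and disj: "disjoint_family_on A P" and cover: "(\<Union>a\<in>P. A a) = {0..1}"
  shows "box_integral m (B(i := {0..1})) G = (\<Sum>a\<in>P. box_integral m (B(i := A a)) G)"
proof -
  have "(\<Sum>a\<in>P. box_integral m (B(i := A a)) G)
     = (LINT x|cube_lebesgue m. (\<Sum>a\<in>P. indicator (PiE {1..m} (B(i := A a))) x *\<^sub>R G x))"
    unfolding box_integral_def set_lebesgue_integral_def using B A
    by (intro Bochner_Integration.integral_sum[symmetric] integrable_mult_indicator G sets_cube_lebesgue_PiE)
      auto
  also have "\<dots> = box_integral m (B(i := {0..1})) G"
    unfolding box_integral_def set_lebesgue_integral_def
  proof (intro Bochner_Integration.integral_cong refl)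
    fix x assume "x \<in> space (cube_lebesgue m)"
    then have x: "x \<in> extensional {1..m}" "x i \<in> {0..1}"
      using i by (auto simp: space_cube_lebesgue PiE_iff)
    define q :: real where "q = indicator (PiE ({1..m} - {i}) B) (restrict x ({1..m} - {i}))"
    have box: "indicator (PiE {1..m} (B(i := D))) x = q * indicator D (x i)" for D
      using x(1) i by (auto simp: q_def indicator_def PiE_iff extensional_def)
    have "(\<Sum>a\<in>P. indicator (A a) (x i) :: real) = indicator (\<Union>a\<in>P. A a) (x i)"
      using P disj by (intro indicator_UN_disjoint[symmetric]) auto
    then have sum_one: "(\<Sum>a\<in>P. indicator (A a) (x i) :: real) = 1"
      using x(2) cover by simp
    have whole: "indicator {0..1} (x i) = (1::real)" using x(2) by simp
    have "(\<Sum>a\<in>P. indicator (PiE {1..m} (B(i := A a))) x *\<^sub>R G x)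
        = (q * (\<Sum>a\<in>P. indicator (A a) (x i))) *\<^sub>R G x"
      by (simp only: box sum_distrib_left scaleR_sum_left)
    also have "\<dots> = indicator (PiE {1..m} (B(i := {0..1}))) x *\<^sub>R G x"
      by (simp only: sum_one box[of "{0..1}"] whole)
    finally show "(\<Sum>a\<in>P. indicator (PiE {1..m} (B(i := A a))) x *\<^sub>R G x)
        = indicator (PiE {1..m} (B(i := {0..1}))) x *\<^sub>R G x" .
  qed
  finally show ?thesis ..
qed

lemma box_integral_independent_coords:
  fixes G :: "(nat \<Rightarrow> real) \<Rightarrow> complex"
  assumes G: "integrable (cube_lebesgue m) G"
    and const: "\<And>j y t. j \<in> {1..m} - S \<Longrightarrow> y \<in> space (cube_lebesgue m) \<Longrightarrow> t \<in> {0..1} \<Longrightarrow>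
      G (y(j := t)) = G y"
    and B: "\<And>k. k \<in> {1..m} \<Longrightarrow> B k \<in> sets unit_lebesgue"
    and Bout: "\<And>j. j \<in> {1..m} - S \<Longrightarrow> B j = {0..1}"
    and A: "\<And>j. j \<in> {1..m} \<Longrightarrow> A j \<in> sets unit_lebesgue"
    and J: "J \<subseteq> {1..m} - S"
  shows "box_integral m (\<lambda>j. if j \<in> J then A j else B j) G
     = (\<Prod>j\<in>J. measure unit_lebesgue (A j)) *\<^sub>R box_integral m B G"
proof -
  have "finite J" using J by (rule finite_subset) auto
  then show ?thesis using J
  proof (induction J rule: finite_induct)
    case empty
    then show ?case by simp
  next
    case (insert j J)
    define BJ where "BJ = (\<lambda>j. if j \<in> J then A j else B j)"
    have j: "j \<in> {1..m}" "j \<in> {1..m} - S" using insert by auto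
    have "(\<lambda>k. if k \<in> insert j J then A k else B k) = BJ(j := A j)"
      by (auto simp: BJ_def fun_eq_iff)
    moreover have "box_integral m (BJ(j := A j)) G = measure unit_lebesgue (A j) *\<^sub>R box_integral m BJ G"
      using insert(2) A B Bout[OF j(2)] j(1)
      by (intro box_integral_fun_upd_const G j(1) const[OF j(2)]) (auto simp: BJ_def)
    moreover have "box_integral m BJ G = (\<Prod>j\<in>J. measure unit_lebesgue (A j)) *\<^sub>R box_integral m B G"
      using insert unfolding BJ_def by auto
    ultimately show ?case using insert(1,2) by simp
  qed
qed

section \<open>Coordinate boxes of a partition\<close>

definition coord_box :: "(nat \<Rightarrow> real set) \<Rightarrow> nat set \<Rightarrow> nat \<Rightarrow> real set" where
  "coord_box A S j = (if j \<in> S then A j else {0..1})"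

lemma coord_box_sets:
  "(\<And>j. j \<in> {1..m} \<Longrightarrow> A j \<in> sets unit_lebesgue) \<Longrightarrow> j \<in> {1..m} \<Longrightarrow>
    coord_box A S j \<in> sets unit_lebesgue"
  using sets.top[of unit_lebesgue] by (simp add: coord_box_def)

lemma box_integral_eq_coord_box:
  fixes G :: "(nat \<Rightarrow> real) \<Rightarrow> complex"
  assumes G: "integrable (cube_lebesgue m) G"
    and dep: "\<And>x y. x \<in> space (cube_lebesgue m) \<Longrightarrow> y \<in> space (cube_lebesgue m) \<Longrightarrow>
      (\<forall>i\<in>S. x i = y i) \<Longrightarrow> G x = G y"
    and A: "\<And>j. j \<in> {1..m} \<Longrightarrow> A j \<in> sets unit_lebesgue"
  shows "box_integral m A G = (\<Prod>j\<in>{1..m} - S. measure unit_lebesgue (A j)) *\<^sub>R box_integral m (coord_box A S) G"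
proof -
  have "PiE {1..m} A = PiE {1..m} (\<lambda>j. if j \<in> {1..m} - S then A j else coord_box A S j)"
    by (rule PiE_cong) (simp add: coord_box_def)
  then have "box_integral m A G = box_integral m (\<lambda>j. if j \<in> {1..m} - S then A j else coord_box A S j) G"
    by (simp only: box_integral_def)
  also have "\<dots> = (\<Prod>j\<in>{1..m} - S. measure unit_lebesgue (A j)) *\<^sub>R box_integral m (coord_box A S) G"
  proof (rule box_integral_independent_coords[OF G _ coord_box_sets[OF A] _ A order.refl])
    show "G (y(j := t)) = G y" if "j \<in> {1..m} - S" "y \<in> space (cube_lebesgue m)" "t \<in> {0..1}" for j y t
      using that by (intro dep fun_upd_in_space_cube_lebesgue) auto
    show "coord_box A S j = {0..1}" if "j \<in> {1..m} - S" for j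
      using that by (simp add: coord_box_def)
  qed
  finally show ?thesis .
qed

lemma box_integral_eq_normalized_coord_box:
  fixes G :: "(nat \<Rightarrow> real) \<Rightarrow> complex" and \<alpha> :: "nat \<Rightarrow> real"
  assumes G: "integrable (cube_lebesgue m) G" and S: "S \<subseteq> {1..m}"
    and dep: "\<And>x y. x \<in> space (cube_lebesgue m) \<Longrightarrow> y \<in> space (cube_lebesgue m) \<Longrightarrow>
      (\<forall>i\<in>S. x i = y i) \<Longrightarrow> G x = G y"
    and A: "\<And>j. j \<in> {1..m} \<Longrightarrow> A j \<in> sets unit_lebesgue"
    and A_measure: "\<And>j. j \<in> {1..m} \<Longrightarrow> measure unit_lebesgue (A j) = \<alpha> j"
    and \<alpha>: "\<And>j. j \<in> {1..m} \<Longrightarrow> \<alpha> j \<noteq> 0"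
  shows "box_integral m A G = (\<Prod>j\<in>{1..m}. complex_of_real (\<alpha> j))
    * (box_integral m (coord_box A S) G / (\<Prod>j\<in>S. complex_of_real (\<alpha> j)))"
proof -
  let ?a = "\<lambda>j. complex_of_real (\<alpha> j)"
  have "box_integral m A G = (\<Prod>j\<in>{1..m} - S. measure unit_lebesgue (A j)) *\<^sub>R box_integral m (coord_box A S) G"
    by (rule box_integral_eq_coord_box[OF G dep A])
  also have "(\<Prod>j\<in>{1..m} - S. measure unit_lebesgue (A j)) = (\<Prod>j\<in>{1..m} - S. \<alpha> j)"
    using A_measure by (intro prod.cong) auto
  also have "(\<Prod>j\<in>{1..m} - S. \<alpha> j) *\<^sub>R box_integral m (coord_box A S) G
      = (\<Prod>j\<in>{1..m} - S. ?a j) * box_integral m (coord_box A S) G"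
    by (simp only: scaleR_conv_of_real of_real_prod)
  also have "(\<Prod>j\<in>{1..m} - S. ?a j) = (\<Prod>j\<in>{1..m}. ?a j) / prod ?a S"
  proof -
    have "finite S" using S finite_subset by blast
    moreover have "\<forall>j\<in>S. ?a j \<noteq> 0" using S \<alpha> by auto
    ultimately have "prod ?a S \<noteq> 0" by simp
    moreover have "(\<Prod>j\<in>{1..m}. ?a j) = (\<Prod>j\<in>{1..m} - S. ?a j) * prod ?a S"
      using S by (intro prod.subset_diff) auto
    ultimately show ?thesis by simp
  qed
  finally show ?thesis by simp
qed

lemma walsh_expansionD:
  assumes "walsh_expansion m f F" and "S \<subseteq> {1..m}"
  shows "integrable (cube_lebesgue m) (F S)"
    and "\<And>x y. x \<in> space (cube_lebesgue m) \<Longrightarrow> y \<in> space (cube_lebesgue m) \<Longrightarrow>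
      (\<forall>i\<in>S. x i = y i) \<Longrightarrow> F S x = F S y"
    and "\<And>i. i \<in> S \<Longrightarrow> AE x in cube_lebesgue m.
      integrable unit_lebesgue (\<lambda>t. F S (x(i := t))) \<and> (LINT t|unit_lebesgue. F S (x(i := t))) = 0"
  using assms unfolding walsh_expansion_def by blast+

lemma alternating_on_card_eq_1: "card S = 1 \<Longrightarrow> alternating_on m S g"
  by (auto simp: alternating_on_def card_1_singleton_iff)

lemma box_integral_coord_box_eq_neg_sum:
  fixes G :: "(nat \<Rightarrow> real) \<Rightarrow> complex"
  assumes G: "integrable (cube_lebesgue m) G" and T: "T \<subseteq> {1..m}" and p: "p \<in> T"
    and mean_zero: "AE y in cube_lebesgue m. integrable unit_lebesgue (\<lambda>t. G (y(p := t)))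
       \<and> (LINT t|unit_lebesgue. G (y(p := t))) = 0"
    and alt: "alternating_on m T G"
    and A: "\<And>j. j \<in> {1..m} \<Longrightarrow> A j \<in> sets unit_lebesgue"
    and disj: "disjoint_family_on A {1..m}" and cover: "(\<Union>j\<in>{1..m}. A j) = {0..1}"
  shows "box_integral m (coord_box A T) G = - (\<Sum>q\<in>{1..m} - T. box_integral m ((coord_box A T)(p := A q)) G)"
proof -
  let ?M = "\<lambda>q. box_integral m ((coord_box A T)(p := A q)) G"
  have p': "p \<in> {1..m}" using T p by blast
  have B: "\<And>j. j \<in> {1..m} \<Longrightarrow> coord_box A T j \<in> sets unit_lebesgue" by (rule coord_box_sets[OF A])
  have "box_integral m ((coord_box A T)(p := {0..1})) G = 0"
    by (rule box_integral_eq_0_if_mean_zero[OF G p' _ _ mean_zero]) (use B sets.top[of unit_lebesgue] in auto)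
  then have "0 = box_integral m ((coord_box A T)(p := {0..1})) G" ..
  also have "\<dots> = (\<Sum>q\<in>{1..m}. ?M q)"
    by (rule box_integral_partition_sum[OF G p' B finite_atLeastAtMost A disj cover])
  also have "\<dots> = (\<Sum>q\<in>{1..m} - T. ?M q) + (\<Sum>q\<in>T. ?M q)"
    using T by (intro sum.subset_diff) auto
  also have "(\<Sum>q\<in>T. ?M q) = ?M p + (\<Sum>q\<in>T - {p}. ?M q)"
    using T p by (intro sum.remove) (auto intro: finite_subset)
  also have "(coord_box A T)(p := A p) = coord_box A T"
    using p by (simp add: coord_box_def fun_eq_iff)
  also have "(\<Sum>q\<in>T - {p}. ?M q) = 0"
  proof (intro sum.neutral ballI)
    fix q assume q: "q \<in> T - {p}"
    have q': "q \<in> {1..m}" using q T by blast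
    show "?M q = 0"
    proof (rule box_integral_alternating_eq_0[OF G p' q'])
      show "G (x(p := x q, q := x p)) = - G x" if "x \<in> space (cube_lebesgue m)" for x
        by (rule alt[unfolded alternating_on_def, rule_format]) (use q p that in auto)
      show "((coord_box A T)(p := A q)) k \<in> sets unit_lebesgue" if "k \<in> {1..m}" for k
        using that B A[OF q'] by simp
      show "((coord_box A T)(p := A q)) p = ((coord_box A T)(p := A q)) q"
        using q by (simp add: coord_box_def)
    qed
  qed
  finally show ?thesis by (metis add.commute add.right_neutral eq_neg_iff_add_eq_0)
qed

lemma box_integral_coord_box_exchange:
  fixes F :: "nat set \<Rightarrow> (nat \<Rightarrow> real) \<Rightarrow> complex" and c :: "nat set \<Rightarrow> complex"
  assumes F: "\<And>T. T \<subseteq> {1..m} \<Longrightarrow> integrable (cube_lebesgue m) (F T)"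
    and S: "S \<subseteq> {1..m}" and l: "l \<in> {1..m} - S"
    and rel: "AE x in cube_lebesgue m. F S x / c S
      = (\<Sum>i\<in>S. F (insert l S - {i}) (x(l := x i, i := x l)) / c (insert l S - {i}))"
    and A: "\<And>j. j \<in> {1..m} \<Longrightarrow> A j \<in> sets unit_lebesgue"
  shows "box_integral m (coord_box A S) (F S) / c S
    = (\<Sum>i\<in>S. box_integral m ((coord_box A (insert l S - {i}))(l := A i)) (F (insert l S - {i}))
        / c (insert l S - {i}))"
proof -
  let ?S = "\<lambda>i. insert l S - {i}"
  have S_i: "?S i \<subseteq> {1..m}" for i using S l by blast
  have i: "i \<in> S \<Longrightarrow> i \<in> {1..m}" for i using S by blast
  have swap_int: "i \<in> S \<Longrightarrow> integrable (cube_lebesgue m) (\<lambda>x. F (?S i) (x(l := x i, i := x l)))" for i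
    by (rule integrable_swap_coords[OF F[OF S_i]]) (use l i in auto)
  have box: "PiE {1..m} (coord_box A S) \<in> sets (cube_lebesgue m)"
    by (intro sets_cube_lebesgue_PiE coord_box_sets[OF A])
  have "box_integral m (coord_box A S) (F S) / c S = box_integral m (coord_box A S) (\<lambda>x. F S x / c S)"
    by (simp only: box_integral_divide)
  also have "\<dots> = box_integral m (coord_box A S)
      (\<lambda>x. \<Sum>i\<in>S. F (?S i) (x(l := x i, i := x l)) / c (?S i))"
    unfolding box_integral_def
  proof (rule set_lebesgue_integral_cong_AE[OF box])
    show "(\<lambda>x. F S x / c S) \<in> borel_measurable (cube_lebesgue m)"
      by (intro borel_measurable_divide borel_measurable_const borel_measurable_integrable F S)
    show "(\<lambda>x. \<Sum>i\<in>S. F (?S i) (x(l := x i, i := x l)) / c (?S i)) \<in> borel_measurable (cube_lebesgue m)"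
      by (intro borel_measurable_sum borel_measurable_divide borel_measurable_const
          borel_measurable_integrable swap_int)
    show "AE x \<in> PiE {1..m} (coord_box A S) in cube_lebesgue m. F S x / c S
        = (\<Sum>i\<in>S. F (?S i) (x(l := x i, i := x l)) / c (?S i))"
      using rel by eventually_elim simp
  qed
  also have "\<dots> = (\<Sum>i\<in>S. box_integral m (coord_box A S) (\<lambda>x. F (?S i) (x(l := x i, i := x l))) / c (?S i))"
    unfolding box_integral_divide[symmetric]
    by (intro box_integral_sum integrable_divide_zero swap_int coord_box_sets[OF A])
  also have "\<dots> = (\<Sum>i\<in>S. box_integral m ((coord_box A (?S i))(l := A i)) (F (?S i)) / c (?S i))"
  proof (intro sum.cong refl arg_cong2[where f="(/)"])
    fix i assume "i \<in> S"
    then have "(coord_box A S)(l := coord_box A S i, i := coord_box A S l) = (coord_box A (?S i))(l := A i)"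
      using l by (auto simp: coord_box_def fun_eq_iff)
    then show "box_integral m (coord_box A S) (\<lambda>x. F (?S i) (x(l := x i, i := x l)))
        = box_integral m ((coord_box A (?S i))(l := A i)) (F (?S i))"
      using box_integral_swap[OF F[OF S_i] _ i coord_box_sets[OF A], of l] l \<open>i \<in> S\<close> by simp
  qed
  finally show ?thesis .
qed

section \<open>Exchanging one element of a subset\<close>

lemma card_insert_Diff_singleton:
  "finite S \<Longrightarrow> l \<notin> S \<Longrightarrow> i \<in> S \<Longrightarrow> card (insert l S - {i}) = card S"
  by (simp add: card_insert_if)

lemma sum_card_subsets_exchange:
  fixes h :: "'a set \<Rightarrow> 'a \<Rightarrow> 'a \<Rightarrow> 'b::comm_monoid_add"
  assumes I: "finite I"
  shows "(\<Sum>S\<in>{S. S \<subseteq> I \<and> card S = k}. \<Sum>l\<in>I - S. \<Sum>i\<in>S. h (insert l S - {i}) l i)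
       = (\<Sum>T\<in>{S. S \<subseteq> I \<and> card S = k}. \<Sum>p\<in>T. \<Sum>q\<in>I - T. h T p q)"
proof -
  let ?SS = "{S. S \<subseteq> I \<and> card S = k}"
  have fin: "finite ?SS" "\<forall>S\<in>?SS. finite ((I - S) \<times> S)" "\<forall>T\<in>?SS. finite (T \<times> (I - T))"
    using I by (auto intro: finite_subset)
  have "(\<Sum>S\<in>?SS. \<Sum>l\<in>I - S. \<Sum>i\<in>S. h (insert l S - {i}) l i)
      = (\<Sum>(S, l, i)\<in>(SIGMA S:?SS. (I - S) \<times> S). h (insert l S - {i}) l i)"
    unfolding sum.cartesian_product by (rule sum.Sigma[OF fin(1,2)])
  also have "\<dots> = (\<Sum>(T, p, q)\<in>(SIGMA T:?SS. T \<times> (I - T)). h T p q)"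
  proof (rule sum.reindex_bij_witness[where j="\<lambda>(S, l, i). (insert l S - {i}, l, i)"
        and i="\<lambda>(T, p, q). (insert q T - {p}, p, q)"])
    fix x assume "x \<in> (SIGMA S:?SS. (I - S) \<times> S)"
    moreover obtain S l i where "x = (S, l, i)" by (cases x) blast
    moreover have "finite S" if "S \<subseteq> I" using that I by (rule finite_subset)
    ultimately show "(\<lambda>(T, p, q). (insert q T - {p}, p, q)) ((\<lambda>(S, l, i). (insert l S - {i}, l, i)) x) = x"
      "(\<lambda>(S, l, i). (insert l S - {i}, l, i)) x \<in> (SIGMA T:?SS. T \<times> (I - T))"
      "(\<lambda>(T, p, q). h T p q) ((\<lambda>(S, l, i). (insert l S - {i}, l, i)) x) = (\<lambda>(S, l, i). h (insert l S - {i}) l i) x"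
      by (auto simp: card_insert_Diff_singleton)
  next
    fix y assume "y \<in> (SIGMA T:?SS. T \<times> (I - T))"
    moreover obtain T p q where "y = (T, p, q)" by (cases y) blast
    moreover have "finite T" if "T \<subseteq> I" using that I by (rule finite_subset)
    ultimately show "(\<lambda>(S, l, i). (insert l S - {i}, l, i)) ((\<lambda>(T, p, q). (insert q T - {p}, p, q)) y) = y"
      "(\<lambda>(T, p, q). (insert q T - {p}, p, q)) y \<in> (SIGMA S:?SS. (I - S) \<times> S)"
      by (auto simp: card_insert_Diff_singleton)
  qed
  also have "\<dots> = (\<Sum>T\<in>?SS. \<Sum>p\<in>T. \<Sum>q\<in>I - T. h T p q)"
    unfolding sum.cartesian_product by (rule sum.Sigma[OF fin(1,3), symmetric])
  finally show ?thesis .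
qed

lemma sum_eq_0_of_exchange_relations:
  fixes a :: "'a \<Rightarrow> 'b::field" and K c :: "'a set \<Rightarrow> 'b" and M :: "'a set \<Rightarrow> 'a \<Rightarrow> 'a \<Rightarrow> 'b"
  assumes I: "finite I" and a: "sum a I = 1"
    and vanish: "\<And>T p. T \<in> {S. S \<subseteq> I \<and> card S = k} \<Longrightarrow> p \<in> T \<Longrightarrow>
      K T = - (\<Sum>q\<in>I - T. M T p q)"
    and exchange: "\<And>S l. S \<in> {S. S \<subseteq> I \<and> card S = k} \<Longrightarrow> l \<in> I - S \<Longrightarrow>
      K S / c S = (\<Sum>i\<in>S. M (insert l S - {i}) l i / c (insert l S - {i}))"
  shows "(\<Sum>S\<in>{S. S \<subseteq> I \<and> card S = k}. K S / c S) = 0"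
proof -
  let ?SS = "{S. S \<subseteq> I \<and> card S = k}"
  have outside: "(\<Sum>S\<in>?SS. (\<Sum>l\<in>I - S. a l) * (K S / c S)) = - (\<Sum>S\<in>?SS. (\<Sum>p\<in>S. a p) * (K S / c S))"
  proof -
    have "(\<Sum>S\<in>?SS. (\<Sum>l\<in>I - S. a l) * (K S / c S))
        = (\<Sum>S\<in>?SS. \<Sum>l\<in>I - S. \<Sum>i\<in>S. a l * (M (insert l S - {i}) l i / c (insert l S - {i})))"
    proof (intro sum.cong refl)
      fix S assume S: "S \<in> ?SS"
      have "(\<Sum>l\<in>I - S. a l) * (K S / c S) = (\<Sum>l\<in>I - S. a l * (K S / c S))"
        by (rule sum_distrib_right)
      also have "\<dots> = (\<Sum>l\<in>I - S. a l * (\<Sum>i\<in>S. M (insert l S - {i}) l i / c (insert l S - {i})))"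
        by (intro sum.cong refl) (simp only: exchange[OF S])
      finally show "(\<Sum>l\<in>I - S. a l) * (K S / c S)
          = (\<Sum>l\<in>I - S. \<Sum>i\<in>S. a l * (M (insert l S - {i}) l i / c (insert l S - {i})))"
        by (simp only: sum_distrib_left)
    qed
    also have "\<dots> = (\<Sum>T\<in>?SS. \<Sum>p\<in>T. \<Sum>q\<in>I - T. a p * (M T p q / c T))"
      by (rule sum_card_subsets_exchange[OF I])
    also have "\<dots> = (\<Sum>T\<in>?SS. \<Sum>p\<in>T. a p * (- K T / c T))"
      by (intro sum.cong refl) (simp add: vanish sum_distrib_left sum_divide_distrib)
    also have "\<dots> = - (\<Sum>S\<in>?SS. (\<Sum>p\<in>S. a p) * (K S / c S))"
      by (simp add: sum_distrib_right sum_negf sum_divide_distrib)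
    finally show ?thesis .
  qed
  have "(\<Sum>S\<in>?SS. K S / c S) = (\<Sum>S\<in>?SS. ((\<Sum>l\<in>I - S. a l) + (\<Sum>l\<in>S. a l)) * (K S / c S))"
    using I a by (intro sum.cong refl) (simp add: sum.subset_diff[symmetric])
  also have "\<dots> = 0"
    unfolding distrib_right sum.distrib outside by simp
  finally show ?thesis .
qed

theorem mainTheorem2:
  fixes m k :: nat and \<alpha> :: "nat \<Rightarrow> real"
    and f :: "(nat \<Rightarrow> real) \<Rightarrow> complex" and F :: "nat set \<Rightarrow> (nat \<Rightarrow> real) \<Rightarrow> complex"
  assumes alpha: "\<forall>i\<in>{1..m}. 0 < \<alpha> i \<and> \<alpha> i < 1"
    and alpha_sum: "(\<Sum>i\<in>{1..m}. \<alpha> i) = 1"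
    and f_int: "integrable (cube_lebesgue m) f"
    and walsh: "walsh_expansion m f F"
    and k: "1 \<le> k" "k \<le> m"
    and alt: "\<forall>S. S \<subseteq> {1..m} \<and> card S = k \<and> 2 \<le> k \<longrightarrow> alternating_on m S (F S)"
    and rel: "\<forall>S. S \<subseteq> {1..m} \<and> card S = k \<and> k \<le> m - 1 \<longrightarrow>
       (\<forall>l\<in>{1..m} - S. AE x in cube_lebesgue m.
          F S x / (\<Prod>i\<in>S. complex_of_real (\<alpha> i)) =
          (\<Sum>i\<in>S. F (insert l S - {i}) (x(l := x i, i := x l))
                     / (\<Prod>j\<in>insert l S - {i}. complex_of_real (\<alpha> j))))"
  shows "\<forall>A. alpha_partition m \<alpha> A \<longrightarrow>
     set_lebesgue_integral (cube_lebesgue m) (PiE {1..m} A)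
       (\<lambda>x. \<Sum>S\<in>{S. S \<subseteq> {1..m} \<and> card S = k}. F S x) = 0"
proof (intro allI impI)
  fix A assume "alpha_partition m \<alpha> A"
  note A = alpha_partition_unit_lebesgue[OF this]
  note F = walsh_expansionD[OF walsh]
  let ?SS = "{S. S \<subseteq> {1..m} \<and> card S = k}"
  let ?a = "\<lambda>j. complex_of_real (\<alpha> j)"
  let ?K = "\<lambda>T. box_integral m (coord_box A T) (F T)"
  have sum_zero: "(\<Sum>S\<in>?SS. ?K S / prod ?a S) = 0"
  proof (rule sum_eq_0_of_exchange_relations[where M="\<lambda>T p q. box_integral m ((coord_box A T)(p := A q)) (F T)"])
    show "sum ?a {1..m} = 1" using alpha_sum by (simp flip: of_real_sum)
  next
    fix T p assume T: "T \<in> ?SS" and p: "p \<in> T"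
    then have T_sub: "T \<subseteq> {1..m}" by simp
    have "alternating_on m T (F T)" using alt T alternating_on_card_eq_1 k by (cases "2 \<le> k") auto
    then show "?K T = - (\<Sum>q\<in>{1..m} - T. box_integral m ((coord_box A T)(p := A q)) (F T))"
      by (rule box_integral_coord_box_eq_neg_sum[OF F(1)[OF T_sub] T_sub p F(3)[OF T_sub p] _ A(1,3,4)])
  next
    fix S l assume S: "S \<in> ?SS" and l: "l \<in> {1..m} - S"
    then have S_sub: "S \<subseteq> {1..m}" by simp
    have "card S < card {1..m}" using S_sub l by (intro psubset_card_mono) auto
    with S l rel have rel_S: "AE x in cube_lebesgue m. F S x / prod ?a S
        = (\<Sum>i\<in>S. F (insert l S - {i}) (x(l := x i, i := x l)) / prod ?a (insert l S - {i}))" by simp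
    show "?K S / prod ?a S = (\<Sum>i\<in>S. box_integral m ((coord_box A (insert l S - {i}))(l := A i))
        (F (insert l S - {i})) / prod ?a (insert l S - {i}))"
      using F(1) S_sub l rel_S A(1) by (rule box_integral_coord_box_exchange)
  qed simp
  have component: "box_integral m A (F S) = prod ?a {1..m} * (?K S / prod ?a S)" if "S \<in> ?SS" for S
  proof -
    have S_sub: "S \<subseteq> {1..m}" using that by simp
    have "\<And>j. j \<in> {1..m} \<Longrightarrow> \<alpha> j \<noteq> 0" using alpha by fastforce
    from box_integral_eq_normalized_coord_box[OF F(1)[OF S_sub] S_sub F(2)[OF S_sub] A(1,2) this]
    show ?thesis .
  qed
  have "(LINT x:PiE {1..m} A|cube_lebesgue m. \<Sum>S\<in>?SS. F S x) = (\<Sum>S\<in>?SS. box_integral m A (F S))"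
    unfolding box_integral_def[symmetric] using F(1) A(1) by (intro box_integral_sum) auto
  also have "\<dots> = prod ?a {1..m} * (\<Sum>S\<in>?SS. ?K S / prod ?a S)"
    unfolding sum_distrib_left by (rule sum.cong[OF refl component])
  finally show "(LINT x:PiE {1..m} A|cube_lebesgue m. \<Sum>S\<in>?SS. F S x) = 0"
    by (simp only: sum_zero mult_zero_right)
qed

end
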